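(* Let $V$ be a Lie triple system over a field of characteristic $0$, $U(V)$ its universal enveloping algebra, and $A=U(V)/I$ a quotient of $U(V)$ by a two-sided ideal $I$ (elements of $V$ are identified with their images in $A$). If $a\in V$ satisfies $[L_a,L_b]=0$ as operators on $A$ for all $b\in V$, then $a\in {\rm Z}(A)$.
   Context: A Lie triple system (L.t.s.) is a vector space $V$ with trilinear product $[\cdot,\cdot,\cdot]$ satisfying $[a,a,b]=0$, $[a,b,c]+[b,c,a]+[c,a,b]=0$, $[x,y,[a,b,c]]=[[x,y,a],b,c]+[a,[x,y,b],c]+[a,b,[x,y,c]]$. Its universal enveloping algebra $U(V)$ (in the sense of Pérez-Izquierdo, $V$ viewed as a Bol algebra with zero binary bracket) is a unital non-associative bialgebra generated as a unital algebra by $V\subseteq U(V)$ ($V$ = primitive elements), satisfying $\sum a_{(1)}(y(a_{(2)}z))=\sum (a_{(1)}(ya_{(2)}))z$; in particular $(a,y,z)=-(y,a,z)$ for $a\in V$, $y,z\in U(V)$, where $(x,y,z)=(xy)z-x(yz)$, $ab=ba$ and $a(bc)-b(ac)=[a,b,c]$ for $a,b,c\in V$. $L_x$ is left multiplication by $x$. The centre ${\rm Z}(A)$ is the set of elements commuting with every element of $A$ and lying in the left, middle and right associative nuclei of $A$. *)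

theory Defs
  imports Complex_Main
begin

definition trilinear ::
  "('k::field \<Rightarrow> 'v::ab_group_add \<Rightarrow> 'v) \<Rightarrow> ('v \<Rightarrow> 'v \<Rightarrow> 'v \<Rightarrow> 'v) \<Rightarrow> bool" where
  "trilinear s T \<longleftrightarrow>
     (\<forall>y z. Vector_Spaces.linear s s (\<lambda>x. T x y z)) \<and>
     (\<forall>x z. Vector_Spaces.linear s s (\<lambda>y. T x y z)) \<and>
     (\<forall>x y. Vector_Spaces.linear s s (\<lambda>z. T x y z))"

definition lie_triple_system ::
  "('k::field \<Rightarrow> 'v::ab_group_add \<Rightarrow> 'v) \<Rightarrow> ('v \<Rightarrow> 'v \<Rightarrow> 'v \<Rightarrow> 'v) \<Rightarrow> bool" where
  "lie_triple_system s T \<longleftrightarrow>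
     vector_space s \<and> trilinear s T \<and>
     (\<forall>a b. T a a b = 0) \<and>
     (\<forall>a b c. T a b c + T b c a + T c a b = 0) \<and>
     (\<forall>x y a b c. T x y (T a b c) = T (T x y a) b c + T a (T x y b) c + T a b (T x y c))"

definition unital_algebra ::
  "('k::field \<Rightarrow> 'a::ab_group_add \<Rightarrow> 'a) \<Rightarrow> ('a \<Rightarrow> 'a \<Rightarrow> 'a) \<Rightarrow> 'a \<Rightarrow> bool" where
  "unital_algebra s m one \<longleftrightarrow>
     vector_space s \<and>
     (\<forall>y. Vector_Spaces.linear s s (\<lambda>x. m x y)) \<and> (\<forall>x. Vector_Spaces.linear s s (\<lambda>y. m x y)) \<and>
     (\<forall>x. m one x = x \<and> m x one = x)"

inductive_set gen_subalg ::
  "('k::field \<Rightarrow> 'a::ab_group_add \<Rightarrow> 'a) \<Rightarrow> ('a \<Rightarrow> 'a \<Rightarrow> 'a) \<Rightarrow> 'a \<Rightarrow> 'a set \<Rightarrow> 'a set"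
  for s m one S where
  gen_one: "one \<in> gen_subalg s m one S"
| gen_base: "x \<in> S \<Longrightarrow> x \<in> gen_subalg s m one S"
| gen_zero: "0 \<in> gen_subalg s m one S"
| gen_add: "x \<in> gen_subalg s m one S \<Longrightarrow> y \<in> gen_subalg s m one S \<Longrightarrow> x + y \<in> gen_subalg s m one S"
| gen_scale: "x \<in> gen_subalg s m one S \<Longrightarrow> s c x \<in> gen_subalg s m one S"
| gen_mult: "x \<in> gen_subalg s m one S \<Longrightarrow> y \<in> gen_subalg s m one S \<Longrightarrow> m x y \<in> gen_subalg s m one S"

definition assoc :: "('a::ab_group_add \<Rightarrow> 'a \<Rightarrow> 'a) \<Rightarrow> 'a \<Rightarrow> 'a \<Rightarrow> 'a \<Rightarrow> 'a" where
  "assoc m x y z = m (m x y) z - m x (m y z)"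

definition centre :: "('a::ab_group_add \<Rightarrow> 'a \<Rightarrow> 'a) \<Rightarrow> 'a set" where
  "centre m = {x. (\<forall>y. m x y = m y x) \<and>
      (\<forall>y z. assoc m x y z = 0 \<and> assoc m y x z = 0 \<and> assoc m y z x = 0)}"

text \<open>(A, iota) is a quotient of the universal enveloping algebra U(V) of the
  Lie triple system V (Perez-Izquierdo), iota being the composite V -> U(V) -> A.
  U(V) is the free unital nonassociative algebra on V modulo the ideal generated
  by ab - ba, (a,x,y) + (x,a,y), a(bc) - b(ac) - [a,b,c] (a,b,c in V); hence the
  quotients of U(V) by two-sided ideals are, up to isomorphism, exactly the unital
  algebras generated by the image of a linear map iota satisfying these relations.\<close>
definition quotient_of_UV ::
  "('k::field \<Rightarrow> 'v::ab_group_add \<Rightarrow> 'v) \<Rightarrow> ('v \<Rightarrow> 'v \<Rightarrow> 'v \<Rightarrow> 'v) \<Rightarrow>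
   ('k \<Rightarrow> 'a::ab_group_add \<Rightarrow> 'a) \<Rightarrow> ('a \<Rightarrow> 'a \<Rightarrow> 'a) \<Rightarrow> 'a \<Rightarrow> ('v \<Rightarrow> 'a) \<Rightarrow> bool" where
  "quotient_of_UV sV T sA m one iota \<longleftrightarrow>
     lie_triple_system sV T \<and> unital_algebra sA m one \<and> Vector_Spaces.linear sV sA iota \<and>
     gen_subalg sA m one (range iota) = UNIV \<and>
     (\<forall>a b. m (iota a) (iota b) = m (iota b) (iota a)) \<and>
     (\<forall>a y z. assoc m (iota a) y z = - assoc m y (iota a) z) \<and>
     (\<forall>a b c. m (iota a) (m (iota b) (iota c)) - m (iota b) (m (iota a) (iota c))
              = iota (T a b c))"

end

theory Submission
  imports Defs
begin

(* Write L x for left multiplication by x, and identify V with its image in A. The defining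
   relation (c,y,z) = -(y,c,z) of U(V) says L(cw) + L(wc) = L(c) L(w) + L(w) L(c) for c in V, so
     2 L(cw) = L(c) L(w) + L(w) L(c) - L(wc - cw).
   Filter A by the length of right-normed words c1(c2(...(ck 1))); since V generates A, every
   element has finite degree. The relation a(bc) - b(ac) = [a,b,c] makes [L(c), L(d)] preserve
   degrees, and by induction on deg w both L(w) and [L(w), L(c)] raise degrees by at most deg w.
   In particular wc - cw has degree at most deg w, which is what lets the displayed identity
   drive an induction on degree: it spreads [L(a), L(b)] = 0 from generators b to
   [L(a), L(w)] = 0 for all w. Evaluating at 1 gives aw = wa, and then (a,y,z) = -(y,a,z) yields
   the three nucleus conditions. Only the defining relations of U(V) are used, and of the
   characteristic only that 2 is invertible. *)

locale UV_relations =
  fixes sA :: "'k::field \<Rightarrow> 'a::ab_group_add \<Rightarrow> 'a"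
    and m :: "'a \<Rightarrow> 'a \<Rightarrow> 'a" (infixl \<open>\<cdot>\<close> 70)
    and one :: 'a and \<iota> :: "'v \<Rightarrow> 'a" and T :: "'v \<Rightarrow> 'v \<Rightarrow> 'v \<Rightarrow> 'v"
  assumes unital: "unital_algebra sA m one"
    and two_nonzero: "(2::'k) \<noteq> 0"
    and iota_commute: "\<iota> a \<cdot> \<iota> b = \<iota> b \<cdot> \<iota> a"
    and assoc_iota_skew: "assoc m (\<iota> a) y z = - assoc m y (\<iota> a) z"
    and iota_triple: "\<iota> a \<cdot> (\<iota> b \<cdot> \<iota> c) - \<iota> b \<cdot> (\<iota> a \<cdot> \<iota> c) = \<iota> (T a b c)"
begin

sublocale vector_space sA
  using unital unfolding unital_algebra_def by blast

lemma mult_one_left [simp]: "one \<cdot> x = x"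
  and mult_one_right [simp]: "x \<cdot> one = x"
  using unital unfolding unital_algebra_def by blast+

lemma
  shows mult_add_left: "(x + y) \<cdot> z = x \<cdot> z + y \<cdot> z"
    and mult_diff_left: "(x - y) \<cdot> z = x \<cdot> z - y \<cdot> z"
    and mult_zero_left [simp]: "0 \<cdot> z = 0"
    and mult_scale_left: "sA k x \<cdot> z = sA k (x \<cdot> z)"
proof -
  interpret Vector_Spaces.linear sA sA "\<lambda>x. x \<cdot> z"
    using unital unfolding unital_algebra_def by blast
  show "(x + y) \<cdot> z = x \<cdot> z + y \<cdot> z" by (rule add)
  show "(x - y) \<cdot> z = x \<cdot> z - y \<cdot> z" by (rule diff)
  show "0 \<cdot> z = 0" by (rule zero)
  show "sA k x \<cdot> z = sA k (x \<cdot> z)" by (rule scale)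
qed

lemma
  shows mult_add_right: "z \<cdot> (x + y) = z \<cdot> x + z \<cdot> y"
    and mult_diff_right: "z \<cdot> (x - y) = z \<cdot> x - z \<cdot> y"
    and mult_zero_right [simp]: "z \<cdot> 0 = 0"
    and mult_scale_right: "z \<cdot> sA k x = sA k (z \<cdot> x)"
proof -
  interpret Vector_Spaces.linear sA sA "\<lambda>x. z \<cdot> x"
    using unital unfolding unital_algebra_def by blast
  show "z \<cdot> (x + y) = z \<cdot> x + z \<cdot> y" by (rule add)
  show "z \<cdot> (x - y) = z \<cdot> x - z \<cdot> y" by (rule diff)
  show "z \<cdot> 0 = 0" by (rule zero)
  show "z \<cdot> sA k x = sA k (z \<cdot> x)" by (rule scale)
qed

lemma half_double: "sA (1/2) (x + x) = x"
  using two_nonzero by (simp flip: scale_left_distrib add: field_simps)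

lemma double_cancel:
  fixes x y :: 'a
  shows "x + x = y + y \<Longrightarrow> x = y"
  by (metis half_double)

lemma assoc_iota_skew_expanded:
  "(\<iota> c \<cdot> y) \<cdot> z + (y \<cdot> \<iota> c) \<cdot> z = \<iota> c \<cdot> (y \<cdot> z) + y \<cdot> (\<iota> c \<cdot> z)"
  using assoc_iota_skew[of c y z] unfolding assoc_def by (simp add: algebra_simps)

lemma double_mult_iota_left:
  "(\<iota> c \<cdot> w) \<cdot> x + (\<iota> c \<cdot> w) \<cdot> x = \<iota> c \<cdot> (w \<cdot> x) + w \<cdot> (\<iota> c \<cdot> x) - (w \<cdot> \<iota> c - \<iota> c \<cdot> w) \<cdot> x"
  using assoc_iota_skew_expanded[of c w x] by (simp add: mult_diff_left algebra_simps)

lemma iota_anticommutator: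
  "\<iota> d \<cdot> (\<iota> e \<cdot> y) + \<iota> e \<cdot> (\<iota> d \<cdot> y) = (\<iota> d \<cdot> \<iota> e) \<cdot> y + (\<iota> d \<cdot> \<iota> e) \<cdot> y"
  using assoc_iota_skew_expanded[of d "\<iota> e" y] by (simp add: iota_commute[of e d])

lemma symmetrized_triple_left_mult:
  "\<iota> c \<cdot> (\<iota> d \<cdot> (\<iota> e \<cdot> x)) + \<iota> c \<cdot> (\<iota> e \<cdot> (\<iota> d \<cdot> x))
     + \<iota> d \<cdot> (\<iota> e \<cdot> (\<iota> c \<cdot> x)) + \<iota> e \<cdot> (\<iota> d \<cdot> (\<iota> c \<cdot> x))
   = (\<iota> c \<cdot> (\<iota> d \<cdot> \<iota> e)) \<cdot> x + (\<iota> c \<cdot> (\<iota> d \<cdot> \<iota> e)) \<cdot> x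
     + (\<iota> d \<cdot> (\<iota> e \<cdot> \<iota> c)) \<cdot> x + (\<iota> e \<cdot> (\<iota> d \<cdot> \<iota> c)) \<cdot> x"
  (is "?lhs = ?rhs")
proof -
  let ?de = "\<iota> d \<cdot> \<iota> e"
  have skew: "\<iota> c \<cdot> (?de \<cdot> x) + ?de \<cdot> (\<iota> c \<cdot> x) = (\<iota> c \<cdot> ?de) \<cdot> x + (?de \<cdot> \<iota> c) \<cdot> x"
    by (rule assoc_iota_skew_expanded[symmetric])
  have "?lhs = \<iota> c \<cdot> (\<iota> d \<cdot> (\<iota> e \<cdot> x) + \<iota> e \<cdot> (\<iota> d \<cdot> x))
                + (\<iota> d \<cdot> (\<iota> e \<cdot> (\<iota> c \<cdot> x)) + \<iota> e \<cdot> (\<iota> d \<cdot> (\<iota> c \<cdot> x)))"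
    by (simp add: mult_add_right add.assoc)
  also have "\<dots> = \<iota> c \<cdot> (?de \<cdot> x + ?de \<cdot> x) + (?de \<cdot> (\<iota> c \<cdot> x) + ?de \<cdot> (\<iota> c \<cdot> x))"
    by (simp only: iota_anticommutator)
  also have "\<dots> = (\<iota> c \<cdot> (?de \<cdot> x) + ?de \<cdot> (\<iota> c \<cdot> x)) + (\<iota> c \<cdot> (?de \<cdot> x) + ?de \<cdot> (\<iota> c \<cdot> x))"
    by (simp add: mult_add_right ac_simps)
  also have "\<dots> = (\<iota> c \<cdot> ?de) \<cdot> x + (\<iota> c \<cdot> ?de) \<cdot> x + (?de \<cdot> \<iota> c + ?de \<cdot> \<iota> c) \<cdot> x"
    by (simp add: skew mult_add_left ac_simps)
  also have "\<dots> = ?rhs"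
    by (simp add: iota_anticommutator[symmetric] mult_add_left add.assoc)
  finally show ?thesis .
qed

abbreviation left_commutator :: "'a \<Rightarrow> 'a \<Rightarrow> 'a \<Rightarrow> 'a" where
  "left_commutator x y z \<equiv> x \<cdot> (y \<cdot> z) - y \<cdot> (x \<cdot> z)"

lemma left_commutator_iota_mult_iota:
  "left_commutator (\<iota> c) (\<iota> d) (\<iota> e \<cdot> x)
   = \<iota> e \<cdot> left_commutator (\<iota> c) (\<iota> d) x + \<iota> (T c d e) \<cdot> x"
proof -
  have "left_commutator (\<iota> c) (\<iota> d) (\<iota> e \<cdot> x) - \<iota> e \<cdot> left_commutator (\<iota> c) (\<iota> d) x
    = (\<iota> c \<cdot> (\<iota> d \<cdot> (\<iota> e \<cdot> x)) + \<iota> c \<cdot> (\<iota> e \<cdot> (\<iota> d \<cdot> x))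
        + \<iota> d \<cdot> (\<iota> e \<cdot> (\<iota> c \<cdot> x)) + \<iota> e \<cdot> (\<iota> d \<cdot> (\<iota> c \<cdot> x)))
    - (\<iota> d \<cdot> (\<iota> c \<cdot> (\<iota> e \<cdot> x)) + \<iota> d \<cdot> (\<iota> e \<cdot> (\<iota> c \<cdot> x))
        + \<iota> c \<cdot> (\<iota> e \<cdot> (\<iota> d \<cdot> x)) + \<iota> e \<cdot> (\<iota> c \<cdot> (\<iota> d \<cdot> x)))"
    by (simp add: mult_diff_right algebra_simps)
  also have "\<dots> = (\<iota> c \<cdot> (\<iota> d \<cdot> \<iota> e)) \<cdot> x - (\<iota> d \<cdot> (\<iota> c \<cdot> \<iota> e)) \<cdot> x"
    unfolding symmetrized_triple_left_mult
    by (simp add: iota_commute[of e c] iota_commute[of e d] iota_commute[of d c] algebra_simps)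
  also have "\<dots> = \<iota> (T c d e) \<cdot> x"
    by (simp only: iota_triple flip: mult_diff_left)
  finally show ?thesis by (simp add: algebra_simps)
qed

inductive degree_le :: "nat \<Rightarrow> 'a \<Rightarrow> bool" where
  degree_le_one: "degree_le n one"
| degree_le_zero: "degree_le n 0"
| degree_le_add: "degree_le n x \<Longrightarrow> degree_le n y \<Longrightarrow> degree_le n (x + y)"
| degree_le_scale: "degree_le n x \<Longrightarrow> degree_le n (sA k x)"
| degree_le_mult_iota: "degree_le n x \<Longrightarrow> degree_le (Suc n) (\<iota> c \<cdot> x)"

lemma degree_le_diff: "degree_le n x \<Longrightarrow> degree_le n y \<Longrightarrow> degree_le n (x - y)"
  using degree_le_add[of n x "sA (-1) y"] degree_le_scale[of n y "-1"] by simp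

lemma degree_le_half: "degree_le n (x + x) \<Longrightarrow> degree_le n x"
  by (metis degree_le_scale half_double)

lemma degree_le_Suc: "degree_le n x \<Longrightarrow> degree_le (Suc n) x"
  by (induction rule: degree_le.induct) (auto intro: degree_le.intros)

lemma degree_le_mono:
  assumes "degree_le i x" and "i \<le> j"
  shows "degree_le j x"
  using assms(2) by (induction j rule: dec_induct) (auto intro: degree_le_Suc assms(1))

text \<open>Unlike \<open>degree_le.induct\<close>, the step case may use the induction hypothesis for
  every element of degree at most \<open>n\<close>, not only for \<open>w\<close>.\<close>
lemma degree_le_induct_level [consumes 1, case_names one zero add scale mult_iota]:
  assumes "degree_le n x"
    and one: "\<And>n. P n one" and zero: "\<And>n. P n 0"
    and add: "\<And>n x y. P n x \<Longrightarrow> P n y \<Longrightarrow> P n (x + y)"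
    and scale: "\<And>n k x. P n x \<Longrightarrow> P n (sA k x)"
    and mult_iota: "\<And>n c w. (\<And>v. degree_le n v \<Longrightarrow> P n v) \<Longrightarrow> degree_le n w
      \<Longrightarrow> P (Suc n) (\<iota> c \<cdot> w)"
  shows "P n x"
proof -
  have "\<forall>x. degree_le n x \<longrightarrow> P n x"
  proof (induction n)
    case 0
    have "degree_le k x \<Longrightarrow> k = 0 \<Longrightarrow> P k x" for k x
      by (induction rule: degree_le.induct) (auto intro: one zero add scale)
    then show ?case by blast
  next
    case (Suc n)
    have "degree_le k x \<Longrightarrow> k = Suc n \<Longrightarrow> P k x" for k x
      by (induction rule: degree_le.induct) (use Suc.IH in \<open>auto intro: one zero add scale mult_iota\<close>)
    then show ?case by blast
  qed
  with assms(1) show ?thesis by blast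
qed

lemma degree_le_left_commutator_iota:
  "degree_le j u \<Longrightarrow> degree_le j (left_commutator (\<iota> c) (\<iota> d) u)"
proof (induction rule: degree_le.induct)
  case (degree_le_one n)
  show ?case by (simp add: iota_commute[of c d] degree_le.degree_le_zero)
next
  case (degree_le_zero n)
  show ?case by (simp add: degree_le.degree_le_zero)
next
  case (degree_le_add n x y)
  then show ?case
    using degree_le.degree_le_add[OF degree_le_add.IH]
    by (simp add: mult_add_right algebra_simps)
next
  case (degree_le_scale n x k)
  then show ?case
    using degree_le.degree_le_scale[OF degree_le_scale.IH, of k]
    by (simp add: mult_scale_right scale_right_diff_distrib)
next
  case (degree_le_mult_iota n x e)
  then show ?case
    unfolding left_commutator_iota_mult_iota
    by (intro degree_le.degree_le_add degree_le.degree_le_mult_iota)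
qed

text \<open>Bounding the commutator with \<open>\<iota> c\<close> by \<open>n + j\<close> rather than the obvious \<open>n + j + 1\<close> is
  what makes the induction on the degree of \<open>w\<close> go through.\<close>
definition bounded_left_mult :: "nat \<Rightarrow> 'a \<Rightarrow> bool" where
  "bounded_left_mult n w \<longleftrightarrow>
     (\<forall>j u. degree_le j u \<longrightarrow>
        degree_le (n + j) (w \<cdot> u) \<and> (\<forall>c. degree_le (n + j) (left_commutator w (\<iota> c) u)))"

lemma bounded_left_mult_D:
  assumes "bounded_left_mult n w" and "degree_le j u"
  shows "degree_le (n + j) (w \<cdot> u)" and "degree_le (n + j) (left_commutator w (\<iota> c) u)"
  using assms unfolding bounded_left_mult_def by blast+

lemma bounded_left_mult_one: "bounded_left_mult n one"
  unfolding bounded_left_mult_def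
  by (auto intro: degree_le_mono degree_le_zero)

lemma bounded_left_mult_zero: "bounded_left_mult n 0"
  unfolding bounded_left_mult_def by (simp add: degree_le_zero)

lemma bounded_left_mult_add:
  "bounded_left_mult n x \<Longrightarrow> bounded_left_mult n y \<Longrightarrow> bounded_left_mult n (x + y)"
  unfolding bounded_left_mult_def
  by (auto simp: mult_add_left mult_add_right add_diff_add intro!: degree_le_add)

lemma bounded_left_mult_scale: "bounded_left_mult n x \<Longrightarrow> bounded_left_mult n (sA k x)"
  unfolding bounded_left_mult_def
  by (auto simp: mult_scale_left mult_scale_right simp flip: scale_right_diff_distrib
      intro: degree_le_scale)

lemma bounded_left_mult_commutator_iota:
  "bounded_left_mult n w \<Longrightarrow> degree_le n (w \<cdot> \<iota> c - \<iota> c \<cdot> w)"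
  unfolding bounded_left_mult_def using degree_le_one[of 0] by fastforce

lemma double_left_commutator_mult_iota:
  "left_commutator (\<iota> c' \<cdot> w) (\<iota> c) u + left_commutator (\<iota> c' \<cdot> w) (\<iota> c) u
   = \<iota> c' \<cdot> left_commutator w (\<iota> c) u + left_commutator (\<iota> c') (\<iota> c) (w \<cdot> u)
     + w \<cdot> left_commutator (\<iota> c') (\<iota> c) u + left_commutator w (\<iota> c) (\<iota> c' \<cdot> u)
     - left_commutator (w \<cdot> \<iota> c' - \<iota> c' \<cdot> w) (\<iota> c) u"
proof -
  have "\<iota> c \<cdot> ((\<iota> c' \<cdot> w) \<cdot> u + (\<iota> c' \<cdot> w) \<cdot> u)
     = \<iota> c \<cdot> (\<iota> c' \<cdot> (w \<cdot> u) + w \<cdot> (\<iota> c' \<cdot> u) - (w \<cdot> \<iota> c' - \<iota> c' \<cdot> w) \<cdot> u)"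
    by (simp only: double_mult_iota_left)
  then show ?thesis
    using double_mult_iota_left[of c' w "\<iota> c \<cdot> u"]
    by (simp add: mult_add_right mult_diff_right mult_diff_left algebra_simps)
qed

lemma bounded_left_mult_mult_iota:
  assumes level: "\<And>v. degree_le n v \<Longrightarrow> bounded_left_mult n v" and "degree_le n w"
  shows "bounded_left_mult (Suc n) (\<iota> c' \<cdot> w)"
  unfolding bounded_left_mult_def
proof (intro allI impI conjI)
  fix j u c assume u: "degree_le j u"
  define r where "r = w \<cdot> \<iota> c' - \<iota> c' \<cdot> w"
  have w: "bounded_left_mult n w" using level \<open>degree_le n w\<close> .
  have r: "bounded_left_mult n r"
    unfolding r_def using bounded_left_mult_commutator_iota[OF w] by (rule level)
  have up: "degree_le (Suc n + j) x" if "degree_le (n + j) x" for x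
    using that by (rule degree_le_mono) simp
  have c'u: "degree_le (Suc j) (\<iota> c' \<cdot> u)"
    using u by (rule degree_le_mult_iota)
  have "degree_le (Suc n + j) ((\<iota> c' \<cdot> w) \<cdot> u + (\<iota> c' \<cdot> w) \<cdot> u)"
    unfolding double_mult_iota_left r_def[symmetric]
  proof (intro degree_le_diff degree_le_add)
    show "degree_le (Suc n + j) (\<iota> c' \<cdot> (w \<cdot> u))"
      using degree_le_mult_iota[OF bounded_left_mult_D(1)[OF w u]] by simp
    show "degree_le (Suc n + j) (w \<cdot> (\<iota> c' \<cdot> u))"
      using bounded_left_mult_D(1)[OF w c'u] by simp
    show "degree_le (Suc n + j) (r \<cdot> u)"
      using bounded_left_mult_D(1)[OF r u] by (rule up)
  qed
  then show "degree_le (Suc n + j) ((\<iota> c' \<cdot> w) \<cdot> u)"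
    by (rule degree_le_half)
  have "degree_le (Suc n + j)
      (left_commutator (\<iota> c' \<cdot> w) (\<iota> c) u + left_commutator (\<iota> c' \<cdot> w) (\<iota> c) u)"
    unfolding double_left_commutator_mult_iota r_def[symmetric]
  proof (rule degree_le_diff, (rule degree_le_add)+)
    show "degree_le (Suc n + j) (\<iota> c' \<cdot> left_commutator w (\<iota> c) u)"
      using degree_le_mult_iota[OF bounded_left_mult_D(2)[OF w u]] by simp
    show "degree_le (Suc n + j) (left_commutator (\<iota> c') (\<iota> c) (w \<cdot> u))"
      using degree_le_left_commutator_iota[OF bounded_left_mult_D(1)[OF w u]] by (rule up)
    show "degree_le (Suc n + j) (w \<cdot> left_commutator (\<iota> c') (\<iota> c) u)"
      using bounded_left_mult_D(1)[OF w degree_le_left_commutator_iota[OF u]] by (rule up)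
    show "degree_le (Suc n + j) (left_commutator w (\<iota> c) (\<iota> c' \<cdot> u))"
      using bounded_left_mult_D(2)[OF w c'u] by simp
    show "degree_le (Suc n + j) (left_commutator r (\<iota> c) u)"
      using bounded_left_mult_D(2)[OF r u] by (rule up)
  qed
  then show "degree_le (Suc n + j) (left_commutator (\<iota> c' \<cdot> w) (\<iota> c) u)"
    by (rule degree_le_half)
qed

lemma bounded_left_mult_degree_le: "degree_le n w \<Longrightarrow> bounded_left_mult n w"
  by (induction rule: degree_le_induct_level)
    (auto intro: bounded_left_mult_one bounded_left_mult_zero bounded_left_mult_add
      bounded_left_mult_scale bounded_left_mult_mult_iota)

lemma degree_le_mult: "degree_le i x \<Longrightarrow> degree_le j y \<Longrightarrow> degree_le (i + j) (x \<cdot> y)"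
  using bounded_left_mult_degree_le unfolding bounded_left_mult_def by blast

lemma ex_degree_le: "x \<in> gen_subalg sA m one (range \<iota>) \<Longrightarrow> \<exists>n. degree_le n x"
proof (induction rule: gen_subalg.induct)
  case gen_one
  show ?case by (blast intro: degree_le_one)
next
  case (gen_base x)
  then obtain b where "x = \<iota> b \<cdot> one" by auto
  then show ?case by (blast intro: degree_le_mult_iota degree_le_one)
next
  case gen_zero
  show ?case by (blast intro: degree_le_zero)
next
  case (gen_add x y)
  then obtain i j where "degree_le i x" "degree_le j y" by blast
  then have "degree_le (max i j) x" "degree_le (max i j) y" by (auto elim: degree_le_mono)
  then show ?case by (blast intro: degree_le_add)
next
  case (gen_scale x c)
  then show ?case by (blast intro: degree_le_scale)
next
  case (gen_mult x y)
  then show ?case by (blast intro: degree_le_mult)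
qed

lemma left_mult_commute_degree_le:
  assumes iota_a: "\<And>b x. \<iota> a \<cdot> (\<iota> b \<cdot> x) = \<iota> b \<cdot> (\<iota> a \<cdot> x)" and "degree_le n w"
  shows "\<iota> a \<cdot> (w \<cdot> z) = w \<cdot> (\<iota> a \<cdot> z)"
  using \<open>degree_le n w\<close>
proof (induction arbitrary: z rule: degree_le_induct_level)
  case (one n)
  show ?case by simp
next
  case (zero n)
  show ?case by simp
next
  case (add n x y)
  then show ?case by (simp add: mult_add_left mult_add_right)
next
  case (scale n k x)
  then show ?case by (simp add: mult_scale_left mult_scale_right)
next
  case (mult_iota n c w)
  define r where "r = w \<cdot> \<iota> c - \<iota> c \<cdot> w"
  have "degree_le n r"
    unfolding r_def
    by (rule bounded_left_mult_commutator_iota[OF bounded_left_mult_degree_le]) (fact mult_iota(2))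
  then have commute_r: "\<iota> a \<cdot> (r \<cdot> x) = r \<cdot> (\<iota> a \<cdot> x)" for x
    by (rule mult_iota(1))
  have commute_w: "\<iota> a \<cdot> (w \<cdot> x) = w \<cdot> (\<iota> a \<cdot> x)" for x
    using mult_iota(2) by (rule mult_iota(1))
  have "\<iota> a \<cdot> ((\<iota> c \<cdot> w) \<cdot> z + (\<iota> c \<cdot> w) \<cdot> z) = \<iota> a \<cdot> (\<iota> c \<cdot> (w \<cdot> z) + w \<cdot> (\<iota> c \<cdot> z) - r \<cdot> z)"
    by (simp only: double_mult_iota_left r_def)
  also have "\<dots> = \<iota> c \<cdot> (w \<cdot> (\<iota> a \<cdot> z)) + w \<cdot> (\<iota> c \<cdot> (\<iota> a \<cdot> z)) - r \<cdot> (\<iota> a \<cdot> z)"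
    by (simp add: mult_add_right mult_diff_right iota_a[of c] commute_w commute_r)
  also have "\<dots> = (\<iota> c \<cdot> w) \<cdot> (\<iota> a \<cdot> z) + (\<iota> c \<cdot> w) \<cdot> (\<iota> a \<cdot> z)"
    by (simp only: double_mult_iota_left r_def)
  finally show ?case
    unfolding mult_add_right by (rule double_cancel)
qed

lemma iota_in_centre:
  assumes left_mult_commute: "\<And>w z. \<iota> a \<cdot> (w \<cdot> z) = w \<cdot> (\<iota> a \<cdot> z)"
  shows "\<iota> a \<in> centre m"
proof -
  have commute: "\<iota> a \<cdot> w = w \<cdot> \<iota> a" for w
    using left_mult_commute[of w one] by simp
  have left_assoc: "(\<iota> a \<cdot> w) \<cdot> z = \<iota> a \<cdot> (w \<cdot> z)" for w z
  proof (rule double_cancel)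
    show "(\<iota> a \<cdot> w) \<cdot> z + (\<iota> a \<cdot> w) \<cdot> z = \<iota> a \<cdot> (w \<cdot> z) + \<iota> a \<cdot> (w \<cdot> z)"
      using assoc_iota_skew_expanded[of a w z] by (simp only: commute[of w] left_mult_commute[of w z])
  qed
  show ?thesis
    unfolding centre_def assoc_def
    by (auto simp: left_assoc commute[symmetric] left_mult_commute[symmetric])
qed

end

theorem lemma2p8:
  fixes sV :: "'k::field_char_0 \<Rightarrow> 'v::ab_group_add \<Rightarrow> 'v"
    and T :: "'v \<Rightarrow> 'v \<Rightarrow> 'v \<Rightarrow> 'v"
    and sA :: "'k \<Rightarrow> 'a::ab_group_add \<Rightarrow> 'a"
    and m :: "'a \<Rightarrow> 'a \<Rightarrow> 'a" and one :: 'a and iota :: "'v \<Rightarrow> 'a"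
    and a :: 'v
  assumes "quotient_of_UV sV T sA m one iota"
    and "\<forall>b x. m (iota a) (m (iota b) x) = m (iota b) (m (iota a) x)"
  shows "iota a \<in> centre m"
proof -
  interpret UV_relations sA m one iota T
    using assms(1) unfolding quotient_of_UV_def by unfold_locales auto
  show ?thesis
  proof (rule iota_in_centre)
    fix w z
    have "w \<in> gen_subalg sA m one (range iota)"
      using assms(1) unfolding quotient_of_UV_def by simp
    then obtain n where "degree_le n w"
      using ex_degree_le by blast
    with assms(2) show "m (iota a) (m w z) = m w (m (iota a) z)"
      by (blast intro: left_mult_commute_degree_le)
  qed
qed

end
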